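(* Let $n$ be a positive integer with $n \equiv 1 \pmod{3}$. Then every $n \times n$ Latin square $L$ satisfies $$I(L) \ge \frac{4n(n-1)}{9},$$ where $$I(L) = \frac{1}{3} \sum_{0 \le r_1 < r_2 \le n-1} \left\lvert 3\, d(r_1,r_2) - n(n+1) \right\rvert$$ and $d(r_1,r_2) = \sum_{s=0}^{n-1} \lvert \mathrm{pos}(r_1,s) - \mathrm{pos}(r_2,s) \rvert$.
   Context: An $n \times n$ Latin square is an $n\times n$ array with entries in $\{0,\dots,n-1\}$ in which each symbol occurs exactly once in each row and exactly once in each column. Rows and columns are indexed by $\{0,\dots,n-1\}$. For a row $r$ and a symbol $s$, $\mathrm{pos}(r,s) \in \{0,\dots,n-1\}$ denotes the column in which symbol $s$ appears in row $r$. All absolute values are of ordinary integers; $I(L)$ is a rational number (the imbalance of $L$). *)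

theory Defs
  imports Complex_Main
begin

definition latin_square :: "nat \<Rightarrow> (nat \<Rightarrow> nat \<Rightarrow> nat) \<Rightarrow> bool" where
  "latin_square n L \<longleftrightarrow>
     (\<forall>r<n. \<forall>c<n. L r c < n) \<and>
     (\<forall>r<n. \<forall>s<n. \<exists>!c. c < n \<and> L r c = s) \<and>
     (\<forall>c<n. \<forall>s<n. \<exists>!r. r < n \<and> L r c = s)"

definition pos :: "nat \<Rightarrow> (nat \<Rightarrow> nat \<Rightarrow> nat) \<Rightarrow> nat \<Rightarrow> nat \<Rightarrow> nat" where
  "pos n L r s = (THE c. c < n \<and> L r c = s)"

definition row_dist :: "nat \<Rightarrow> (nat \<Rightarrow> nat \<Rightarrow> nat) \<Rightarrow> nat \<Rightarrow> nat \<Rightarrow> int" where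
  "row_dist n L r1 r2 = (\<Sum>s<n. \<bar>int (pos n L r1 s) - int (pos n L r2 s)\<bar>)"

definition imbalance :: "nat \<Rightarrow> (nat \<Rightarrow> nat \<Rightarrow> nat) \<Rightarrow> rat" where
  "imbalance n L = (1/3) * of_int (\<Sum>(r1, r2) \<in> {(r1, r2). r1 < r2 \<and> r2 < n}.
       \<bar>3 * row_dist n L r1 r2 - int n * (int n + 1)\<bar>)"

end

theory Submission
  imports Defs
begin

text \<open>Every column of a Latin square is a permutation, so summing the row distances over all
  ordered pairs of rows gives n times the sum of |a - b| over a, b < n; hence the mean of
  3 d(r1, r2) over the n(n-1)/2 unordered pairs is exactly n(n+1). Every row is a permutation
  too, which makes each d(r1, r2) even, and for n = 1 (mod 3) this forces
  3 d(r1, r2) - n(n+1) = 4 (mod 6). A zero-sum family of integers that are all 4 (mod 6) has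
  absolute values summing to at least 8/3 times its size, which is the bound.\<close>

lemma latin_square_pos:
  assumes "latin_square n L" "r < n" "s < n"
  shows "pos n L r s < n \<and> L r (pos n L r s) = s"
proof -
  have "\<exists>!c. c < n \<and> L r c = s" using assms unfolding latin_square_def by blast
  then show ?thesis unfolding pos_def by (rule theI')
qed

lemma bij_betw_pos_row:
  assumes "latin_square n L" "r < n"
  shows "bij_betw (pos n L r) {..<n} {..<n}"
proof -
  have "inj_on (pos n L r) {..<n}"
  proof (rule inj_onI)
    fix a b assume "a \<in> {..<n}" "b \<in> {..<n}" "pos n L r a = pos n L r b"
    then show "a = b" using latin_square_pos[OF assms] by (metis lessThan_iff)
  qed
  moreover have "pos n L r ` {..<n} \<subseteq> {..<n}" using latin_square_pos[OF assms] by auto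
  ultimately show ?thesis by (simp add: bij_betw_def endo_inj_surj)
qed

lemma bij_betw_pos_column:
  assumes "latin_square n L" "s < n"
  shows "bij_betw (\<lambda>r. pos n L r s) {..<n} {..<n}"
proof -
  have column_unique: "\<forall>c<n. \<forall>s<n. \<exists>!r. r < n \<and> L r c = s"
    using assms(1) unfolding latin_square_def by (elim conjE)
  have "inj_on (\<lambda>r. pos n L r s) {..<n}"
  proof (rule inj_onI)
    fix a b assume "a \<in> {..<n}" "b \<in> {..<n}" and eq: "pos n L a s = pos n L b s"
    then have "a < n" "b < n" by simp_all
    have pos_a: "pos n L a s < n \<and> L a (pos n L a s) = s"
      using latin_square_pos[OF assms(1) \<open>a < n\<close> assms(2)] .
    have "L b (pos n L a s) = s"
      unfolding eq using latin_square_pos[OF assms(1) \<open>b < n\<close> assms(2)] by (rule conjunct2)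
    moreover have "\<exists>!r. r < n \<and> L r (pos n L a s) = s"
      using column_unique pos_a assms(2) by blast
    ultimately show "a = b" using pos_a \<open>a < n\<close> \<open>b < n\<close> by blast
  qed
  moreover have "(\<lambda>r. pos n L r s) ` {..<n} \<subseteq> {..<n}"
    using latin_square_pos[OF assms(1) _ assms(2)] by auto
  ultimately show ?thesis by (simp add: bij_betw_def endo_inj_surj)
qed

lemma sum_sum_reindex_bij_betw:
  assumes "bij_betw f A B"
  shows "(\<Sum>i\<in>A. \<Sum>j\<in>A. g (f i) (f j)) = (\<Sum>i\<in>B. \<Sum>j\<in>B. (g i j :: 'a :: comm_monoid_add))"
proof -
  have "(\<Sum>i\<in>A. \<Sum>j\<in>A. g (f i) (f j)) = (\<Sum>i\<in>A. \<Sum>j\<in>B. g (f i) j)"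
    by (intro sum.cong refl sum.reindex_bij_betw[OF assms])
  also have "\<dots> = (\<Sum>i\<in>B. \<Sum>j\<in>B. g i j)"
    using sum.reindex_bij_betw[OF assms, of "\<lambda>i. \<Sum>j\<in>B. g i j"] by simp
  finally show ?thesis .
qed

lemma sum_abs_diff_lessThan_self:
  "2 * (\<Sum>i<n. \<bar>int i - int n\<bar>) = int n * (int n + 1)"
proof (induction n)
  case (Suc n)
  have "(\<Sum>i<n. \<bar>int i - int (Suc n)\<bar>) = (\<Sum>i<n. \<bar>int i - int n\<bar> + 1)"
    by (rule sum.cong) auto
  then have "(\<Sum>i<Suc n. \<bar>int i - int (Suc n)\<bar>) = (\<Sum>i<n. \<bar>int i - int n\<bar>) + int n + 1"
    by (simp add: sum.distrib)
  then show ?case using Suc by (simp add: algebra_simps)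
qed simp

lemma sum_sum_abs_diff_lessThan:
  "3 * (\<Sum>i<n. \<Sum>j<n. \<bar>int i - int j\<bar>) = int n * (int n + 1) * (int n - 1)"
proof (induction n)
  case (Suc n)
  have "(\<Sum>j<n. \<bar>int n - int j\<bar>) = (\<Sum>i<n. \<bar>int i - int n\<bar>)"
    by (rule sum.cong) auto
  then have "(\<Sum>i<Suc n. \<Sum>j<Suc n. \<bar>int i - int j\<bar>) =
      (\<Sum>i<n. \<Sum>j<n. \<bar>int i - int j\<bar>) + 2 * (\<Sum>i<n. \<bar>int i - int n\<bar>)"
    by (simp add: sum.distrib)
  then show ?case using Suc sum_abs_diff_lessThan_self[of n] by (simp add: algebra_simps)
qed simp

lemma sum_upper_pairs:
  fixes n :: nat
  shows "(\<Sum>(i, j) \<in> {(i, j). i < j \<and> j < n}. h i j) = (\<Sum>j<n. \<Sum>i<j. (h i j :: 'a :: comm_monoid_add))"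
proof (induction n)
  case (Suc n)
  have split: "{(i, j). i < j \<and> j < Suc n} = {(i, j). i < j \<and> j < n} \<union> (\<lambda>i. (i, n)) ` {..<n}"
    by auto
  have "finite {(i, j). i < j \<and> j < n}"
    by (rule finite_subset[of _ "{..<n} \<times> {..<n}"]) auto
  moreover have "inj_on (\<lambda>i. (i, n)) {..<n}" by (auto simp: inj_on_def)
  ultimately show ?case
    unfolding split using Suc by (subst sum.union_disjoint) (auto simp: sum.reindex)
qed simp

lemma sum_square_symmetric:
  fixes g :: "nat \<Rightarrow> nat \<Rightarrow> 'a :: comm_semiring_1"
  assumes "\<And>i j. g i j = g j i"
  shows "(\<Sum>i<n. \<Sum>j<n. g i j) = 2 * (\<Sum>(i, j) \<in> {(i, j). i < j \<and> j < n}. g i j) + (\<Sum>i<n. g i i)"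
  unfolding sum_upper_pairs
proof (induction n)
  case (Suc n)
  have "(\<Sum>j<n. g n j) = (\<Sum>i<n. g i n)" using assms by simp
  then show ?case using Suc by (simp add: sum.distrib algebra_simps mult_2)
qed simp

lemma card_upper_pairs:
  "2 * of_nat (card {(i, j). i < j \<and> j < n}) = of_nat n * (of_nat n - (1 :: 'a :: comm_ring_1))"
proof -
  have "n * n = 2 * card {(i, j). i < j \<and> j < n} + n"
    using sum_square_symmetric[of "\<lambda>_ _. 1 :: nat" n] by simp
  then have "of_nat n * of_nat n = 2 * of_nat (card {(i, j). i < j \<and> j < n}) + (of_nat n :: 'a)"
    by (metis of_nat_add of_nat_mult of_nat_numeral)
  then show ?thesis by (simp add: algebra_simps)
qed

lemma even_sum_abs_diff:
  fixes f g :: "'a \<Rightarrow> int"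
  assumes "sum f A = sum g A"
  shows "even (\<Sum>a\<in>A. \<bar>f a - g a\<bar>)"
proof -
  have "(\<Sum>a\<in>A. \<bar>f a - g a\<bar>) = (\<Sum>a\<in>A. 2 * max (f a) (g a) - f a - g a)"
    by (rule sum.cong) auto
  also have "\<dots> = 2 * ((\<Sum>a\<in>A. max (f a) (g a)) - sum f A)"
    using assms by (simp add: sum_subtractf sum_distrib_left sum.distrib algebra_simps)
  finally show ?thesis by simp
qed

lemma row_dist_commute: "row_dist n L r1 r2 = row_dist n L r2 r1"
  unfolding row_dist_def by (rule sum.cong) auto

lemma row_dist_self: "row_dist n L r r = 0"
  unfolding row_dist_def by simp

lemma even_row_dist:
  assumes "latin_square n L" "r1 < n" "r2 < n"
  shows "even (row_dist n L r1 r2)"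
proof -
  have "(\<Sum>s<n. int (pos n L r s)) = (\<Sum>s<n. int s)" if "r < n" for r
    using sum.reindex_bij_betw[OF bij_betw_pos_row[OF assms(1) that], of int] by simp
  then show ?thesis
    unfolding row_dist_def using assms by (intro even_sum_abs_diff) simp
qed

lemma sum_sum_row_dist:
  assumes "latin_square n L"
  shows "(\<Sum>r1<n. \<Sum>r2<n. row_dist n L r1 r2) = int n * (\<Sum>i<n. \<Sum>j<n. \<bar>int i - int j\<bar>)"
proof -
  have "(\<Sum>r1<n. \<Sum>r2<n. row_dist n L r1 r2)
      = (\<Sum>r1<n. \<Sum>s<n. \<Sum>r2<n. \<bar>int (pos n L r1 s) - int (pos n L r2 s)\<bar>)"
    unfolding row_dist_def by (intro sum.cong refl sum.swap)
  also have "\<dots> = (\<Sum>s<n. \<Sum>r1<n. \<Sum>r2<n. \<bar>int (pos n L r1 s) - int (pos n L r2 s)\<bar>)"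
    by (rule sum.swap)
  also have "\<dots> = (\<Sum>s<n. \<Sum>i<n. \<Sum>j<n. \<bar>int i - int j\<bar>)"
  proof (rule sum.cong[OF refl])
    fix s assume "s \<in> {..<n}"
    then show "(\<Sum>r1<n. \<Sum>r2<n. \<bar>int (pos n L r1 s) - int (pos n L r2 s)\<bar>)
        = (\<Sum>i<n. \<Sum>j<n. \<bar>int i - int j\<bar>)"
      using sum_sum_reindex_bij_betw[OF bij_betw_pos_column[OF assms], where g = "\<lambda>a b. \<bar>int a - int b\<bar>"]
      by simp
  qed
  finally show ?thesis by simp
qed

lemma sum_upper_pairs_imbalance_terms_eq_0:
  assumes "latin_square n L"
  shows "(\<Sum>(r1, r2) \<in> {(r1, r2). r1 < r2 \<and> r2 < n}. 3 * row_dist n L r1 r2 - int n * (int n + 1)) = 0"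
proof -
  let ?P = "{(r1, r2). r1 < r2 \<and> r2 < n}"
  define T where "T = (\<Sum>i<n. \<Sum>j<n. \<bar>int i - int j\<bar>)"
  have pairs: "2 * (\<Sum>(r1, r2) \<in> ?P. row_dist n L r1 r2) = int n * T"
    using sum_square_symmetric[of "row_dist n L" n] sum_sum_row_dist[OF assms]
    by (simp add: row_dist_commute row_dist_self T_def)
  have "2 * (\<Sum>(r1, r2) \<in> ?P. 3 * row_dist n L r1 r2 - int n * (int n + 1))
      = 3 * (2 * (\<Sum>(r1, r2) \<in> ?P. row_dist n L r1 r2)) - int n * (int n + 1) * (2 * int (card ?P))"
    by (simp add: sum_subtractf sum_distrib_left case_prod_unfold algebra_simps)
  also have "\<dots> = int n * (3 * T) - int n * (int n + 1) * (int n * (int n - 1))"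
    unfolding pairs card_upper_pairs by (simp add: algebra_simps)
  also have "\<dots> = 0"
    unfolding T_def sum_sum_abs_diff_lessThan by (simp add: algebra_simps)
  finally show ?thesis by simp
qed

lemma imbalance_term_mod_6:
  assumes "n mod 3 = 1" "even d"
  shows "(3 * d - int n * (int n + 1)) mod 6 = 4"
proof -
  obtain m where m: "n = 3 * m + 1" using assms(1) by (metis mod_div_mult_eq add.commute mult.commute)
  obtain t where t: "int m * (int m + 1) = 2 * t" by (metis evenE even_mult_iff odd_add odd_one)
  obtain k where k: "d = 2 * k" using assms(2) by (rule evenE)
  have "int n * (int n + 1) = 9 * (int m * (int m + 1)) + 2"
    unfolding m by (simp add: algebra_simps)
  then have "3 * d - int n * (int n + 1) = 6 * k - (18 * t + 2)"
    unfolding k t by simp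
  then show ?thesis by presburger
qed

text \<open>Residue 4 (mod 6) keeps x away from the interval (-2, 4), where 3 |x| < x + 8.\<close>
lemma card_le_sum_abs_if_zero_sum_mod_6:
  fixes x :: "'a \<Rightarrow> int"
  assumes "sum x A = 0" "\<And>a. a \<in> A \<Longrightarrow> x a mod 6 = 4"
  shows "8 * int (card A) \<le> 3 * (\<Sum>a\<in>A. \<bar>x a\<bar>)"
proof -
  have "8 * int (card A) = (\<Sum>a\<in>A. 8 + x a)"
    using assms(1) by (simp add: sum.distrib)
  also have "\<dots> \<le> (\<Sum>a\<in>A. 3 * \<bar>x a\<bar>)"
  proof (rule sum_mono)
    fix a assume "a \<in> A"
    with assms(2) have "x a mod 6 = 4" by blast
    then show "8 + x a \<le> 3 * \<bar>x a\<bar>" by presburger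
  qed
  finally show ?thesis by (simp add: sum_distrib_left)
qed

theorem theorem3:
  fixes n :: nat and L :: "nat \<Rightarrow> nat \<Rightarrow> nat"
  assumes "n > 0" and "n mod 3 = 1" and "latin_square n L"
  shows "imbalance n L \<ge> 4 * of_nat n * (of_nat n - 1) / 9"
proof -
  let ?P = "{(r1, r2). r1 < r2 \<and> r2 < n}"
  let ?x = "\<lambda>(r1, r2). 3 * row_dist n L r1 r2 - int n * (int n + 1)"
  define S where "S = (\<Sum>p\<in>?P. \<bar>?x p\<bar>)"
  have "\<And>p. p \<in> ?P \<Longrightarrow> ?x p mod 6 = 4"
    using imbalance_term_mod_6[OF assms(2)] even_row_dist[OF assms(3)] by auto
  then have "8 * int (card ?P) \<le> 3 * S"
    unfolding S_def
    using card_le_sum_abs_if_zero_sum_mod_6 sum_upper_pairs_imbalance_terms_eq_0[OF assms(3)] by blast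
  moreover have "2 * int (card ?P) = int n * (int n - 1)"
    by (rule card_upper_pairs)
  ultimately have "4 * (int n * (int n - 1)) \<le> 3 * S"
    by linarith
  then have "(of_int (4 * (int n * (int n - 1))) :: rat) / 9 \<le> of_int (3 * S) / 9"
    by (simp only: of_int_le_iff divide_right_mono)
  moreover have "imbalance n L = of_int S / 3"
    unfolding imbalance_def S_def by (simp add: case_prod_unfold)
  ultimately show ?thesis by simp
qed

end
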